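(* Let $\mathcal H$ be an infinite-dimensional separable Hilbert space with orthonormal basis $\{|\varphi_i\rangle\}_{i=1}^\infty$, and let $\big[\langle\varphi_i|\hat\varrho|\varphi_j\rangle\big]_{i,j=1}^{\infty}$ be an infinite complex matrix. This matrix represents a quantum state (i.e. is the matrix of a density operator in this basis) if and only if: (i) $\sum_{i,j=1}^{\infty}|\langle\varphi_i|\hat\varrho|\varphi_j\rangle|^2\le 1$; (ii) $\langle\varphi_i|\hat\varrho|\varphi_j\rangle=\overline{\langle\varphi_j|\hat\varrho|\varphi_i\rangle}$ for all $1\le i,j<\infty$; (iii) \[\lim_{n\to\infty}\sum_{k=0}^{n}(-1)^k\binom{n}{k}\sum_{i=1}^{\infty}\langle\varphi_i|\hat\varrho^{k+1}|\varphi_i\rangle=0;\] (iv) $\sum_{i=1}^{\infty}\langle\varphi_i|\hat\varrho|\varphi_i\rangle=1$.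
   Context: A density operator on $\mathcal H$ is an operator $\hat\varrho:\mathcal H\to\mathcal H$ defined on all of $\mathcal H$ which is positive, self-adjoint, and has trace $1$. When condition (i) holds, the matrix defines a unique Hilbert–Schmidt operator $\hat\varrho$ on $\mathcal H$ with the given matrix elements; powers refer to this operator. *)

theory Defs
  imports "HOL-Analysis.Analysis"
begin

text \<open>Concrete model of an infinite-dimensional separable Hilbert space: the space
  l2 of square-summable complex sequences indexed by nat, with orthonormal basis
  the standard unit vectors (basis vector i corresponds to the paper's phi_(i+1)).\<close>

definition l2 :: "(nat \<Rightarrow> complex) set" where
  "l2 = {x. summable (\<lambda>i. (cmod (x i))^2)}"

definition cinner :: "(nat \<Rightarrow> complex) \<Rightarrow> (nat \<Rightarrow> complex) \<Rightarrow> complex" where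
  "cinner x y = (\<Sum>i. cnj (x i) * y i)"

definition basis_vec :: "nat \<Rightarrow> nat \<Rightarrow> complex" where
  "basis_vec i = (\<lambda>j. if j = i then 1 else 0)"

definition density_operator :: "((nat \<Rightarrow> complex) \<Rightarrow> (nat \<Rightarrow> complex)) \<Rightarrow> bool" where
  "density_operator T \<longleftrightarrow>
     (\<forall>x\<in>l2. T x \<in> l2) \<and>
     (\<forall>x\<in>l2. \<forall>y\<in>l2. \<forall>a b. T (\<lambda>i. a * x i + b * y i) = (\<lambda>i. a * T x i + b * T y i)) \<and>
     (\<forall>x\<in>l2. \<forall>y\<in>l2. cinner x (T y) = cinner (T x) y) \<and>
     (\<forall>x\<in>l2. 0 \<le> Re (cinner x (T x))) \<and>
     ((\<lambda>i. cinner (basis_vec i) (T (basis_vec i))) sums 1)"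

definition represents_state :: "(nat \<Rightarrow> nat \<Rightarrow> complex) \<Rightarrow> bool" where
  "represents_state M \<longleftrightarrow>
     (\<exists>T. density_operator T \<and>
          (\<forall>i j. cinner (basis_vec i) (T (basis_vec j)) = M i j))"

definition mat_op :: "(nat \<Rightarrow> nat \<Rightarrow> complex) \<Rightarrow> (nat \<Rightarrow> complex) \<Rightarrow> (nat \<Rightarrow> complex)" where
  "mat_op M x = (\<lambda>i. \<Sum>j. M i j * x j)"

end

theory Submission
  imports Defs
begin

text \<open>Conditions (i) and (ii) make M the matrix of a self-adjoint Hilbert--Schmidt operator A
  with \<parallel>A\<parallel> \<le> 1, so S = 1 - A is positive; (iv) says tr A = 1 and, by the binomial theorem,
  (iii) says tr(A S^n) \<rightarrow> 0.

  If A is positive, each diagonal entry <e_i, A S^n e_i> is nonnegative and decreasing in n, and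
  its partial sums over n telescope to 1 - <e_i, S^n e_i> \<le> 1; so it tends to 0, and dominated
  convergence (Tannery's theorem, with bound A_ii) gives tr(A S^n) \<rightarrow> 0.  Conversely, tr(A S^n)
  is decreasing, so if it tends to 0 it stays in [0, 1]; then
  tr(A S^(2m)) - tr(A S^(2m+1)) = \<parallel>A S^m\<parallel>_HS^2 \<le> 1, so every A S^m is a contraction,
  and this excludes vectors of negative A-energy.  Finally, positivity of a density operator
  gives |\<rho>_ij|^2 \<le> \<rho>_ii \<rho>_jj, which yields (i) from (iv).\<close>

section \<open>Square-summable sequences\<close>

definition sqnorm :: "(nat \<Rightarrow> complex) \<Rightarrow> real" where
  "sqnorm x = (\<Sum>i. (cmod (x i))^2)"

lemma l2_lincomb:
  assumes "x \<in> l2" "y \<in> l2"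
  shows "(\<lambda>i. a * x i + b * y i) \<in> l2"
proof -
  have bound: "norm ((cmod (a * x i + b * y i))^2)
      \<le> 2 * (cmod a)^2 * (cmod (x i))^2 + 2 * (cmod b)^2 * (cmod (y i))^2" for i
  proof -
    have "(cmod (a * x i + b * y i))^2 \<le> (cmod a * cmod (x i) + cmod b * cmod (y i))^2"
      by (intro power_mono) (auto simp: norm_mult[symmetric] norm_triangle_ineq)
    also have "\<dots> \<le> 2 * (cmod a)^2 * (cmod (x i))^2 + 2 * (cmod b)^2 * (cmod (y i))^2"
      using zero_le_power2[of "cmod a * cmod (x i) - cmod b * cmod (y i)"]
      by (simp add: power2_diff power2_sum power_mult_distrib)
    finally show ?thesis by simp
  qed
  have "summable (\<lambda>i. 2 * (cmod a)^2 * (cmod (x i))^2 + 2 * (cmod b)^2 * (cmod (y i))^2)"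
    using assms by (intro summable_add summable_mult) (auto simp: l2_def)
  then show ?thesis
    unfolding l2_def mem_Collect_eq using bound by (rule summable_comparison_test'[where N=0])
qed

lemma l2_diff: "x \<in> l2 \<Longrightarrow> y \<in> l2 \<Longrightarrow> (\<lambda>i. x i - y i) \<in> l2"
  using l2_lincomb[of x y 1 "-1"] by simp

lemma basis_vec_in_l2: "basis_vec i \<in> l2"
proof -
  have "(\<lambda>j. (cmod (basis_vec i j))^2) = (\<lambda>j. if j = i then 1 else 0)"
    by (auto simp: basis_vec_def)
  then show ?thesis
    unfolding l2_def using sums_single[of i "\<lambda>_. 1::real"] sums_summable by fastforce
qed

lemma sqnorm_nonneg: "x \<in> l2 \<Longrightarrow> 0 \<le> sqnorm x"
  unfolding sqnorm_def by (intro suminf_nonneg) (auto simp: l2_def)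

lemma summable_cmod_mult_le:
  assumes "x \<in> l2" "y \<in> l2"
  shows "summable (\<lambda>i. cmod (x i) * cmod (y i))"
    and "(\<Sum>i. cmod (x i) * cmod (y i)) \<le> sqrt (sqnorm x) * sqrt (sqnorm y)"
proof -
  have partial: "(\<Sum>i<n. cmod (x i) * cmod (y i)) \<le> sqrt (sqnorm x) * sqrt (sqnorm y)" for n
  proof -
    have "(\<Sum>i<n. cmod (x i) * cmod (y i))
        \<le> L2_set (\<lambda>i. cmod (x i)) {..<n} * L2_set (\<lambda>i. cmod (y i)) {..<n}"
      using L2_set_mult_ineq[of "\<lambda>i. cmod (x i)" "\<lambda>i. cmod (y i)" "{..<n}"] by simp
    also have "\<dots> \<le> sqrt (sqnorm x) * sqrt (sqnorm y)"
      unfolding L2_set_def sqnorm_def using assms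
      by (intro mult_mono real_sqrt_le_mono sum_le_suminf)
        (auto simp: l2_def intro!: sum_nonneg suminf_nonneg)
    finally show ?thesis .
  qed
  show summable: "summable (\<lambda>i. cmod (x i) * cmod (y i))"
    by (rule summableI_nonneg_bounded) (use partial in auto)
  show "(\<Sum>i. cmod (x i) * cmod (y i)) \<le> sqrt (sqnorm x) * sqrt (sqnorm y)"
    by (rule suminf_le_const[OF summable partial])
qed

lemma summable_cinner_terms:
  assumes "x \<in> l2" "y \<in> l2"
  shows "summable (\<lambda>i. cnj (x i) * y i)"
  by (rule summable_norm_cancel) (use summable_cmod_mult_le(1)[OF assms] in \<open>simp add: norm_mult\<close>)

lemma cinner_Cauchy_Schwarz:
  assumes "x \<in> l2" "y \<in> l2"
  shows "cmod (cinner x y) \<le> sqrt (sqnorm x) * sqrt (sqnorm y)"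
proof -
  have "cmod (cinner x y) \<le> (\<Sum>i. cmod (x i) * cmod (y i))"
    using summable_norm[of "\<lambda>i. cnj (x i) * y i"] summable_cmod_mult_le(1)[OF assms]
    by (simp add: cinner_def norm_mult)
  with summable_cmod_mult_le(2)[OF assms] show ?thesis by linarith
qed

lemma cinner_Cauchy_Schwarz_sq:
  assumes "x \<in> l2" "y \<in> l2"
  shows "(cmod (cinner x y))^2 \<le> sqnorm x * sqnorm y"
proof -
  have "(cmod (cinner x y))^2 \<le> (sqrt (sqnorm x) * sqrt (sqnorm y))^2"
    using cinner_Cauchy_Schwarz[OF assms] by (simp add: power_mono)
  also have "\<dots> = sqnorm x * sqnorm y"
    using sqnorm_nonneg assms by (simp add: power_mult_distrib)
  finally show ?thesis .
qed

lemma cinner_lincomb_right: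
  assumes "x \<in> l2" "y \<in> l2" "z \<in> l2"
  shows "cinner x (\<lambda>i. a * y i + b * z i) = a * cinner x y + b * cinner x z"
proof -
  have "cinner x (\<lambda>i. a * y i + b * z i) = (\<Sum>i. a * (cnj (x i) * y i) + b * (cnj (x i) * z i))"
    unfolding cinner_def by (simp add: algebra_simps)
  also have "\<dots> = (\<Sum>i. a * (cnj (x i) * y i)) + (\<Sum>i. b * (cnj (x i) * z i))"
    using assms by (intro suminf_add[symmetric] summable_mult summable_cinner_terms)
  also have "\<dots> = a * cinner x y + b * cinner x z"
    unfolding cinner_def using assms by (simp add: suminf_mult summable_cinner_terms)
  finally show ?thesis .
qed

lemma cinner_commute:
  assumes "x \<in> l2" "y \<in> l2"
  shows "cinner y x = cnj (cinner x y)"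
proof -
  have "(\<lambda>i. cnj (cnj (x i) * y i)) sums cnj (cinner x y)"
    unfolding sums_cnj cinner_def using summable_cinner_terms[OF assms] by (rule summable_sums)
  then show ?thesis
    unfolding cinner_def by (simp add: sums_iff mult.commute)
qed

lemma cinner_lincomb_left:
  assumes "x \<in> l2" "y \<in> l2" "z \<in> l2"
  shows "cinner (\<lambda>i. a * x i + b * y i) z = cnj a * cinner x z + cnj b * cinner y z"
proof -
  have "cinner (\<lambda>i. a * x i + b * y i) z = cnj (cinner z (\<lambda>i. a * x i + b * y i))"
    using assms by (intro cinner_commute l2_lincomb)
  also have "\<dots> = cnj a * cinner x z + cnj b * cinner y z"
    using assms by (simp add: cinner_lincomb_right cinner_commute[of x z] cinner_commute[of y z])
  finally show ?thesis .
qed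

lemma cinner_diff_right:
  assumes "x \<in> l2" "y \<in> l2" "z \<in> l2"
  shows "cinner x (\<lambda>i. y i - z i) = cinner x y - cinner x z"
  using cinner_lincomb_right[OF assms, of 1 "-1"] by simp

lemma cinner_self:
  assumes "x \<in> l2"
  shows "cinner x x = of_real (sqnorm x)"
proof -
  have "(\<lambda>i. cnj (x i) * x i) = (\<lambda>i. of_real ((cmod (x i))^2))"
    using complex_norm_square by (simp add: mult.commute)
  then show ?thesis
    unfolding cinner_def sqnorm_def using assms by (simp add: suminf_of_real l2_def)
qed

lemma cinner_basis_vec_left: "cinner (basis_vec i) x = x i"
proof -
  have "(\<lambda>j. cnj (basis_vec i j) * x j) = (\<lambda>j. if j = i then x j else 0)"
    by (auto simp: basis_vec_def)
  then show ?thesis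
    unfolding cinner_def using sums_single[of i x] by (simp add: sums_iff)
qed

lemma cinner_basis_vec_self: "cinner (basis_vec i) (basis_vec i) = 1"
  by (simp add: cinner_basis_vec_left) (simp add: basis_vec_def)

section \<open>Self-adjoint operators on l2\<close>

text \<open>Operators are arbitrary functions on sequences; all conditions are imposed on l2 only.\<close>

definition self_adjoint_op :: "((nat \<Rightarrow> complex) \<Rightarrow> (nat \<Rightarrow> complex)) \<Rightarrow> bool" where
  "self_adjoint_op T \<longleftrightarrow> (\<forall>x\<in>l2. T x \<in> l2) \<and>
     (\<forall>x\<in>l2. \<forall>y\<in>l2. \<forall>a b. T (\<lambda>i. a * x i + b * y i) = (\<lambda>i. a * T x i + b * T y i)) \<and>
     (\<forall>x\<in>l2. \<forall>y\<in>l2. cinner x (T y) = cinner (T x) y)"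

definition positive_op :: "((nat \<Rightarrow> complex) \<Rightarrow> (nat \<Rightarrow> complex)) \<Rightarrow> bool" where
  "positive_op T \<longleftrightarrow> (\<forall>x\<in>l2. 0 \<le> Re (cinner x (T x)))"

definition contraction_op :: "((nat \<Rightarrow> complex) \<Rightarrow> (nat \<Rightarrow> complex)) \<Rightarrow> bool" where
  "contraction_op T \<longleftrightarrow> (\<forall>x\<in>l2. sqnorm (T x) \<le> sqnorm x)"

definition id_minus :: "((nat \<Rightarrow> complex) \<Rightarrow> (nat \<Rightarrow> complex)) \<Rightarrow> (nat \<Rightarrow> complex) \<Rightarrow> (nat \<Rightarrow> complex)" where
  "id_minus T = (\<lambda>x i. x i - T x i)"

lemma id_minus_apply: "id_minus T x = (\<lambda>i. x i - T x i)"
  by (simp add: id_minus_def)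

context
  fixes T :: "(nat \<Rightarrow> complex) \<Rightarrow> (nat \<Rightarrow> complex)"
  assumes T: "self_adjoint_op T"
begin

lemma self_adjoint_op_in_l2: "x \<in> l2 \<Longrightarrow> T x \<in> l2"
  using T by (simp add: self_adjoint_op_def)

lemma self_adjoint_op_lincomb:
  "x \<in> l2 \<Longrightarrow> y \<in> l2 \<Longrightarrow> T (\<lambda>i. a * x i + b * y i) = (\<lambda>i. a * T x i + b * T y i)"
  using T by (simp add: self_adjoint_op_def)

lemma self_adjoint_op_cinner: "x \<in> l2 \<Longrightarrow> y \<in> l2 \<Longrightarrow> cinner x (T y) = cinner (T x) y"
  using T by (simp add: self_adjoint_op_def)

lemma self_adjoint_op_diff: "x \<in> l2 \<Longrightarrow> y \<in> l2 \<Longrightarrow> T (\<lambda>i. x i - y i) = (\<lambda>i. T x i - T y i)"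
  using self_adjoint_op_lincomb[of x y 1 "-1"] by simp

lemma Im_cinner_self_adjoint_op:
  assumes x: "x \<in> l2"
  shows "Im (cinner x (T x)) = 0"
proof -
  have "cinner x (T x) = cnj (cinner x (T x))"
    using self_adjoint_op_cinner[OF x x] cinner_commute[OF x self_adjoint_op_in_l2[OF x]] by simp
  from arg_cong[OF this, of Im] show ?thesis by simp
qed

lemma funpow_in_l2: "x \<in> l2 \<Longrightarrow> (T ^^ n) x \<in> l2"
  by (induction n) (simp_all add: self_adjoint_op_in_l2)

lemma funpow_commute:
  assumes U: "\<And>x. x \<in> l2 \<Longrightarrow> U x \<in> l2" and comm: "\<And>x. x \<in> l2 \<Longrightarrow> U (T x) = T (U x)"
  shows "x \<in> l2 \<Longrightarrow> U ((T ^^ n) x) = (T ^^ n) (U x)"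
  by (induction n) (simp_all add: comm funpow_in_l2)

end

lemma self_adjoint_op_id: "self_adjoint_op (\<lambda>x. x)"
  by (simp add: self_adjoint_op_def)

lemma self_adjoint_op_comp:
  assumes T: "self_adjoint_op T" and U: "self_adjoint_op U"
    and comm: "\<And>x. x \<in> l2 \<Longrightarrow> T (U x) = U (T x)"
  shows "self_adjoint_op (\<lambda>x. T (U x))"
  unfolding self_adjoint_op_def
proof (intro conjI ballI allI)
  fix x y a b
  assume x: "x \<in> l2" and y: "y \<in> l2"
  show "T (U x) \<in> l2"
    using x T U by (simp add: self_adjoint_op_in_l2)
  show "T (U (\<lambda>i. a * x i + b * y i)) = (\<lambda>i. a * T (U x) i + b * T (U y) i)"
    using x y T U by (simp add: self_adjoint_op_lincomb self_adjoint_op_in_l2)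
  have "cinner x (T (U y)) = cinner (U (T x)) y"
    using x y T U by (simp add: self_adjoint_op_cinner self_adjoint_op_in_l2)
  then show "cinner x (T (U y)) = cinner (T (U x)) y"
    using comm x by simp
qed

lemma self_adjoint_op_funpow: "self_adjoint_op T \<Longrightarrow> self_adjoint_op (T ^^ n)"
proof (induction n)
  case 0
  then show ?case using self_adjoint_op_id by simp
next
  case (Suc n)
  have "self_adjoint_op (\<lambda>x. T ((T ^^ n) x))"
    by (rule self_adjoint_op_comp[OF Suc.prems Suc.IH[OF Suc.prems]]) (simp add: funpow_swap1)
  then show ?case by (simp add: o_def)
qed

lemma self_adjoint_op_id_minus:
  assumes T: "self_adjoint_op T"
  shows "self_adjoint_op (id_minus T)"
  unfolding self_adjoint_op_def id_minus_def
proof (intro conjI ballI allI)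
  fix x y a b
  assume x: "x \<in> l2" and y: "y \<in> l2"
  show "(\<lambda>i. x i - T x i) \<in> l2"
    using x T by (simp add: self_adjoint_op_in_l2 l2_diff)
  show "(\<lambda>i. a * x i + b * y i - T (\<lambda>i. a * x i + b * y i) i) =
        (\<lambda>i. a * (x i - T x i) + b * (y i - T y i))"
    using x y T by (simp add: self_adjoint_op_lincomb algebra_simps)
  show "cinner x (\<lambda>i. y i - T y i) = cinner (\<lambda>i. x i - T x i) y"
    using x y T cinner_lincomb_left[of x "T x" y 1 "-1"]
    by (simp add: cinner_diff_right self_adjoint_op_in_l2 self_adjoint_op_cinner)
qed

lemma funpow_id_minus_commute:
  assumes T: "self_adjoint_op T" and x: "x \<in> l2"
  shows "T ((id_minus T ^^ n) x) = (id_minus T ^^ n) (T x)"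
proof (rule funpow_commute[OF self_adjoint_op_id_minus[OF T] _ _ x])
  show "T (id_minus T y) = id_minus T (T y)" if "y \<in> l2" for y
    unfolding id_minus_def using T that by (simp add: self_adjoint_op_diff self_adjoint_op_in_l2)
qed (use T in \<open>simp add: self_adjoint_op_in_l2\<close>)

lemma cinner_funpow_double:
  assumes T: "self_adjoint_op T" and x: "x \<in> l2"
  shows "cinner x ((T ^^ (m + m)) x) = of_real (sqnorm ((T ^^ m) x))"
proof -
  have "cinner x ((T ^^ (m + m)) x) = cinner ((T ^^ m) x) ((T ^^ m) x)"
    using self_adjoint_op_funpow[OF T] x
    by (simp add: funpow_add self_adjoint_op_cinner funpow_in_l2[OF T])
  then show ?thesis
    using cinner_self[OF funpow_in_l2[OF T x]] by simp
qed

lemma positive_op_funpow: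
  assumes T: "self_adjoint_op T" and P: "positive_op T"
  shows "positive_op (T ^^ n)"
  unfolding positive_op_def
proof
  fix x
  assume x: "x \<in> l2"
  have "n = n div 2 + n div 2 \<or> n = Suc (n div 2 + n div 2)"
    by presburger
  then obtain m where "n = m + m \<or> n = Suc (m + m)"
    by blast
  then show "0 \<le> Re (cinner x ((T ^^ n) x))"
  proof
    assume "n = m + m"
    then show ?thesis
      using cinner_funpow_double[OF T x] sqnorm_nonneg[OF funpow_in_l2[OF T x]] by simp
  next
    assume n: "n = Suc (m + m)"
    have "cinner x ((T ^^ n) x) = cinner ((T ^^ m) x) (T ((T ^^ m) x))"
      using self_adjoint_op_funpow[OF T] x unfolding n
      by (simp add: funpow_add funpow_swap1 self_adjoint_op_cinner funpow_in_l2[OF T]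
          self_adjoint_op_in_l2[OF T])
    then show ?thesis
      using P funpow_in_l2[OF T x] unfolding positive_op_def by simp
  qed
qed

lemma sqnorm_funpow_le:
  assumes T: "self_adjoint_op T" and C: "contraction_op T" and x: "x \<in> l2"
  shows "sqnorm ((T ^^ n) x) \<le> sqnorm x"
proof (induction n)
  case (Suc n)
  have "sqnorm (T ((T ^^ n) x)) \<le> sqnorm ((T ^^ n) x)"
    using C funpow_in_l2[OF T x] unfolding contraction_op_def by blast
  with Suc show ?case by simp
qed simp

lemma positive_op_id_minus:
  assumes T: "self_adjoint_op T" and C: "contraction_op T"
  shows "positive_op (id_minus T)"
  unfolding positive_op_def
proof
  fix x
  assume x: "x \<in> l2"
  have "Re (cinner x (T x)) \<le> sqrt (sqnorm x) * sqrt (sqnorm (T x))"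
    using complex_Re_le_cmod cinner_Cauchy_Schwarz[OF x self_adjoint_op_in_l2[OF T x]] by (rule order.trans)
  also have "\<dots> \<le> sqrt (sqnorm x) * sqrt (sqnorm x)"
    using C x sqnorm_nonneg[OF x] by (intro mult_left_mono) (auto simp: contraction_op_def)
  finally have "Re (cinner x (T x)) \<le> sqnorm x"
    using sqnorm_nonneg[OF x] by simp
  moreover have "cinner x (id_minus T x) = cinner x x - cinner x (T x)"
    unfolding id_minus_def using x T by (simp add: cinner_diff_right self_adjoint_op_in_l2)
  ultimately show "0 \<le> Re (cinner x (id_minus T x))"
    using x by (simp add: cinner_self)
qed

lemma sqnorm_le_sum_sqnorm_basis:
  assumes T: "self_adjoint_op T" and s: "summable (\<lambda>i. sqnorm (T (basis_vec i)))" and x: "x \<in> l2"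
  shows "sqnorm (T x) \<le> (\<Sum>i. sqnorm (T (basis_vec i))) * sqnorm x"
proof -
  have entry: "(cmod (T x j))^2 \<le> sqnorm (T (basis_vec j)) * sqnorm x" for j
  proof -
    have "T x j = cinner (T (basis_vec j)) x"
      using self_adjoint_op_cinner[OF T basis_vec_in_l2 x] by (simp add: cinner_basis_vec_left)
    then show ?thesis
      using cinner_Cauchy_Schwarz_sq[OF self_adjoint_op_in_l2[OF T basis_vec_in_l2] x] by simp
  qed
  have "sqnorm (T x) \<le> (\<Sum>j. sqnorm (T (basis_vec j)) * sqnorm x)"
    unfolding sqnorm_def[of "T x"] using self_adjoint_op_in_l2[OF T x]
    by (intro suminf_le entry summable_mult2 s) (simp add: l2_def)
  also have "\<dots> = (\<Sum>i. sqnorm (T (basis_vec i))) * sqnorm x"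
    by (rule suminf_mult2[OF s, symmetric])
  finally show ?thesis .
qed

lemma sqnorm_funpow_log_convex:
  assumes T: "self_adjoint_op T" and x: "x \<in> l2"
  shows "(sqnorm ((T ^^ Suc j) x))^2 \<le> sqnorm ((T ^^ j) x) * sqnorm ((T ^^ Suc (Suc j)) x)"
proof -
  have "of_real (sqnorm ((T ^^ Suc j) x)) = cinner (T ((T ^^ j) x)) ((T ^^ Suc j) x)"
    using cinner_self[OF funpow_in_l2[OF T x], of "Suc j"] by simp
  also have "\<dots> = cinner ((T ^^ j) x) ((T ^^ Suc (Suc j)) x)"
    using self_adjoint_op_cinner[OF T funpow_in_l2[OF T x, of j] funpow_in_l2[OF T x, of "Suc j"]]
    by simp
  finally have "(sqnorm ((T ^^ Suc j) x))^2 = (cmod (cinner ((T ^^ j) x) ((T ^^ Suc (Suc j)) x)))^2"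
    by (metis norm_of_real power2_abs)
  also have "\<dots> \<le> sqnorm ((T ^^ j) x) * sqnorm ((T ^^ Suc (Suc j)) x)"
    by (intro cinner_Cauchy_Schwarz_sq funpow_in_l2[OF T x])
  finally show ?thesis .
qed

lemma has_sum_product_nonneg:
  fixes a b :: "nat \<Rightarrow> real"
  assumes "\<And>i. 0 \<le> a i" "\<And>i. 0 \<le> b i" "a sums A" "b sums B"
  shows "((\<lambda>(i, j). a i * b j) has_sum (A * B)) UNIV"
proof -
  have a: "(a has_sum A) UNIV" and b: "(b has_sum B) UNIV"
    using assms by (auto intro: sums_nonneg_imp_has_sum)
  have rows: "((\<lambda>j. (\<lambda>(i, j). a i * b j) (i, j)) has_sum a i * B) UNIV" for i
    using has_sum_cmult_right[OF b, of "a i"] by simp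
  have total: "((\<lambda>i. a i * B) has_sum A * B) UNIV"
    using has_sum_cmult_left[OF a] .
  have "(\<lambda>(i, j). a i * b j) summable_on Sigma UNIV (\<lambda>_. UNIV)"
    by (rule summable_on_SigmaI[OF rows]) (use total assms in \<open>auto simp: has_sum_imp_summable\<close>)
  then show ?thesis
    using has_sum_SigmaI[OF rows total] by simp
qed

lemma alternating_binomial_sum_diff:
  fixes v :: "nat \<Rightarrow> complex"
  shows "(\<Sum>k\<le>n. (-1)^k * of_nat (n choose k) * (v k - v (Suc k))) =
         (\<Sum>k\<le>Suc n. (-1)^k * of_nat (Suc n choose k) * v k)"
proof -
  define P where "P = (\<Sum>k\<le>n. (-1)^k * of_nat (n choose k) * v k)"
  define Q where "Q = (\<Sum>k\<le>n. (-1)^k * of_nat (n choose k) * v (Suc k))"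
  define R where "R = (\<Sum>k\<le>n. (-1)^(Suc k) * of_nat (n choose Suc k) * v (Suc k))"
  have "(\<Sum>k\<le>Suc n. (-1)^k * of_nat (Suc n choose k) * v k) =
      v 0 + (\<Sum>k\<le>n. (-1)^(Suc k) * of_nat (Suc n choose Suc k) * v (Suc k))"
    by (subst sum.atMost_Suc_shift) simp
  also have "(\<Sum>k\<le>n. (-1)^(Suc k) * of_nat (Suc n choose Suc k) * v (Suc k)) = R - Q"
    unfolding R_def Q_def
    by (subst sum_subtractf[symmetric], rule sum.cong) (auto simp: algebra_simps)
  also have "v 0 + (R - Q) = P - Q"
  proof -
    have "v 0 + R = (\<Sum>k\<le>Suc n. (-1)^k * of_nat (n choose k) * v k)"
      unfolding R_def by (subst sum.atMost_Suc_shift) simp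
    also have "\<dots> = P"
      unfolding P_def by simp
    finally show ?thesis by simp
  qed
  also have "P - Q = (\<Sum>k\<le>n. (-1)^k * of_nat (n choose k) * (v k - v (Suc k)))"
    unfolding P_def Q_def by (subst sum_subtractf[symmetric]) (simp add: algebra_simps)
  finally show ?thesis ..
qed

lemma cmod_sq_le_of_psd_2x2:
  fixes p q :: real and m :: complex
  assumes psd: "\<And>a b. 0 \<le> Re (cnj a * (a * p + b * m) + cnj b * (a * cnj m + b * q))"
  shows "(cmod m)^2 \<le> p * q"
proof -
  have quadratic: "0 \<le> t^2 * (cmod m)^2 * p - 2 * t * (cmod m)^2 + q" for t :: real
    using psd[of "- (of_real t * m)" 1]
    unfolding cmod_power2 by (simp add: power2_eq_square algebra_simps)
  show ?thesis
  proof (cases "p = 0")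
    case True
    show ?thesis
    proof (rule ccontr)
      assume "\<not> ?thesis"
      then have c: "0 < (cmod m)^2"
        using True by simp
      have linear: "0 \<le> - 2 * t * (cmod m)^2 + q" for t
        using quadratic[of t] True by simp
      have "0 \<le> - 2 * ((q + 1) / (2 * (cmod m)^2)) * (cmod m)^2 + q"
        by (rule linear)
      also have "\<dots> = -1"
        using c by (simp add: field_simps)
      finally show False by simp
    qed
  next
    case False
    then have p: "p > 0"
      using psd[of 1 0] by simp
    have "0 \<le> (1/p)^2 * (cmod m)^2 * p - 2 * (1/p) * (cmod m)^2 + q"
      by (rule quadratic)
    also have "\<dots> = q - (cmod m)^2 / p"
      using p by (simp add: field_simps power2_eq_square)
    finally show ?thesis
      using p by (simp add: field_simps mult.commute)
  qed
qed

text \<open>A positive log-convex sequence with d 0 < d 1 grows geometrically, with ratio d 1 / d 0.\<close>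

lemma log_convex_increments_unbounded:
  fixes d :: "nat \<Rightarrow> real"
  assumes d0: "0 < d 0" and d01: "d 0 < d 1"
    and log_convex: "\<And>j. (d (Suc j))^2 \<le> d j * d (Suc (Suc j))"
  shows "\<exists>j. C < d (Suc j) - d j"
proof -
  define r where "r = d 1 / d 0"
  have r: "1 < r"
    using d0 d01 by (simp add: r_def)
  have grow: "0 < d j \<and> r * d j \<le> d (Suc j)" for j
  proof (induction j)
    case 0
    then show ?case using d0 by (simp add: r_def)
  next
    case (Suc j)
    then have dj: "0 < d j" and step: "r * d j \<le> d (Suc j)"
      by auto
    have dSuc: "0 < d (Suc j)"
      using dj step r by (smt (verit) mult_pos_pos)
    have "d j * (r * d (Suc j)) \<le> d (Suc j) * d (Suc j)"
      using step dSuc by (simp add: mult.left_commute mult_left_mono)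
    also have "\<dots> \<le> d j * d (Suc (Suc j))"
      using log_convex[of j] by (simp add: power2_eq_square)
    finally show ?case
      using dj dSuc by (simp add: mult_le_cancel_left)
  qed
  have geometric: "r ^ j * d 0 \<le> d j" for j
  proof (induction j)
    case (Suc j)
    then have "r ^ Suc j * d 0 \<le> r * d j"
      using r by (simp add: mult.assoc)
    also have "\<dots> \<le> d (Suc j)"
      using grow[of j] by simp
    finally show ?case .
  qed simp
  obtain j where j: "C / ((r - 1) * d 0) < r ^ j"
    using real_arch_pow[OF r] by blast
  have "C < (r - 1) * (r ^ j * d 0)"
    using j r d0 by (simp add: field_simps)
  also have "\<dots> \<le> (r - 1) * d j"
    using geometric[of j] r by (intro mult_left_mono) auto
  also have "\<dots> \<le> d (Suc j) - d j"
    using grow[of j] by (simp add: algebra_simps)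
  finally show ?thesis ..
qed

lemma suminf_eq_infsum:
  fixes g :: "nat \<Rightarrow> 'a::banach"
  assumes "g summable_on UNIV"
  shows "(\<Sum>n. g n) = (\<Sum>\<^sub>\<infinity>n. g n)"
  using sums_unique[OF has_sum_imp_sums[OF has_sum_infsum[OF assms]]] by simp

lemma suminf_swap_summable_on:
  fixes f :: "nat \<Rightarrow> nat \<Rightarrow> 'a::{banach, uniform_topological_group_add}"
  assumes f: "(\<lambda>(i, j). f i j) summable_on UNIV"
  shows "(\<Sum>i. \<Sum>j. f i j) = (\<Sum>j. \<Sum>i. f i j)"
proof -
  have f': "(\<lambda>(j, i). f i j) summable_on UNIV"
    using f summable_on_swap[of "\<lambda>(i, j). f i j" UNIV UNIV] by (simp add: case_prod_unfold)
  have iterated: "(\<Sum>i. \<Sum>j. g i j) = (\<Sum>\<^sub>\<infinity>i. \<Sum>\<^sub>\<infinity>j. g i j)"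
    if g: "(\<lambda>(i, j). g i j) summable_on UNIV" for g :: "nat \<Rightarrow> nat \<Rightarrow> 'a"
  proof -
    have g': "(\<lambda>(i, j). g i j) summable_on Sigma UNIV (\<lambda>_. UNIV)"
      using g by simp
    have rows: "g i summable_on UNIV" for i
      using summable_on_SigmaD1[OF g'] by simp
    have "(\<lambda>i. \<Sum>\<^sub>\<infinity>j. g i j) summable_on UNIV"
      using summable_on_SigmaD[OF g'] rows by simp
    then show ?thesis
      by (simp add: suminf_eq_infsum rows)
  qed
  show ?thesis
    using iterated[OF f] iterated[OF f'] infsum_swap_banach[of f UNIV UNIV] f by simp
qed

section \<open>Hermitian matrices of Hilbert--Schmidt norm at most one\<close>

lemma mat_op_basis_vec: "mat_op M (basis_vec j) i = M i j"
proof -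
  have "(\<lambda>k. M i k * basis_vec j k) = (\<lambda>k. if k = j then M i k else 0)"
    by (auto simp: basis_vec_def)
  then show ?thesis
    unfolding mat_op_def using sums_single[of j "M i"] by (simp add: sums_iff)
qed

lemma cinner_basis_vec_mat_op: "cinner (basis_vec i) (mat_op M (basis_vec j)) = M i j"
  by (simp add: cinner_basis_vec_left mat_op_basis_vec)

locale hermitian_hs_matrix =
  fixes M :: "nat \<Rightarrow> nat \<Rightarrow> complex"
  assumes hermitian: "\<And>i j. M i j = cnj (M j i)"
    and hs_summable: "(\<lambda>(i, j). (cmod (M i j))^2) summable_on UNIV"
    and hs_le_1: "(\<Sum>\<^sub>\<infinity>(i, j)\<in>UNIV. (cmod (M i j))^2) \<le> 1"
begin

definition row :: "nat \<Rightarrow> nat \<Rightarrow> complex" where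
  "row i = (\<lambda>j. cnj (M i j))"

lemma mat_op_eq_cinner_row: "mat_op M x i = cinner (row i) x"
  by (simp add: mat_op_def cinner_def row_def)

lemma mat_op_basis_vec_eq_row: "mat_op M (basis_vec i) = row i"
  unfolding row_def by (rule ext) (subst hermitian, simp add: mat_op_basis_vec)

lemma row_in_l2: "row i \<in> l2"
proof -
  have "(\<lambda>j. (cmod (M i j))^2) summable_on UNIV"
    using summable_on_SigmaD1[of "\<lambda>i j. (cmod (M i j))^2" UNIV "\<lambda>_. UNIV"] hs_summable by simp
  then show ?thesis
    by (simp add: row_def l2_def summable_on_UNIV_nonneg_real_iff)
qed

lemma summable_sqnorm_row: "summable (\<lambda>i. sqnorm (row i))"
  and suminf_sqnorm_row_le_1: "(\<Sum>i. sqnorm (row i)) \<le> 1"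
proof -
  let ?f = "\<lambda>(i, j). (cmod (M i j))^2"
  have f: "?f summable_on Sigma UNIV (\<lambda>_. UNIV)"
    using hs_summable by simp
  have rows: "(\<lambda>j. ?f (i, j)) summable_on UNIV" for i
    using summable_on_SigmaD1[OF f, of i] by simp
  have row_eq: "(\<Sum>\<^sub>\<infinity>j. (cmod (M i j))^2) = sqnorm (row i)" for i
    using suminf_eq_infsum[OF rows[of i]] by (simp add: sqnorm_def row_def)
  have "(\<lambda>i. \<Sum>\<^sub>\<infinity>j. ?f (i, j)) summable_on UNIV"
    using summable_on_SigmaD[OF f] rows by simp
  then have summable_on: "(\<lambda>i. sqnorm (row i)) summable_on UNIV"
    by (simp add: row_eq[symmetric])
  then show "summable (\<lambda>i. sqnorm (row i))"
    by (rule summable_on_imp_summable)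
  have "(\<Sum>i. sqnorm (row i)) = (\<Sum>\<^sub>\<infinity>i. \<Sum>\<^sub>\<infinity>j. ?f (i, j))"
    by (simp add: suminf_eq_infsum[OF summable_on] row_eq)
  also have "\<dots> = (\<Sum>\<^sub>\<infinity>(i, j)\<in>UNIV. (cmod (M i j))^2)"
    using infsum_Sigma_banach[OF f] by simp
  finally show "(\<Sum>i. sqnorm (row i)) \<le> 1"
    using hs_le_1 by simp
qed

lemma sqnorm_mat_op_le:
  assumes x: "x \<in> l2"
  shows "mat_op M x \<in> l2" and "sqnorm (mat_op M x) \<le> sqnorm x"
proof -
  have entry: "(cmod (mat_op M x i))^2 \<le> sqnorm (row i) * sqnorm x" for i
    using cinner_Cauchy_Schwarz_sq[OF row_in_l2 x] by (simp add: mat_op_eq_cinner_row)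
  have bound: "summable (\<lambda>i. sqnorm (row i) * sqnorm x)"
    using summable_sqnorm_row by (rule summable_mult2)
  have summable: "summable (\<lambda>i. (cmod (mat_op M x i))^2)"
    by (rule summable_comparison_test'[where N=0, OF bound]) (simp add: entry)
  then show "mat_op M x \<in> l2"
    by (simp add: l2_def)
  have "sqnorm (mat_op M x) \<le> (\<Sum>i. sqnorm (row i)) * sqnorm x"
    unfolding sqnorm_def[of "mat_op M x"] suminf_mult2[OF summable_sqnorm_row]
    by (rule suminf_le[OF entry summable bound])
  also have "\<dots> \<le> sqnorm x"
    using mult_right_mono[OF suminf_sqnorm_row_le_1 sqnorm_nonneg[OF x]] by simp
  finally show "sqnorm (mat_op M x) \<le> sqnorm x" .
qed

lemma mat_op_lincomb:
  "x \<in> l2 \<Longrightarrow> y \<in> l2 \<Longrightarrow> mat_op M (\<lambda>i. a * x i + b * y i) = (\<lambda>i. a * mat_op M x i + b * mat_op M y i)"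
  by (intro ext) (simp add: mat_op_eq_cinner_row cinner_lincomb_right row_in_l2)

text \<open>Both sides are the absolutely convergent double series of cnj (x i) * M i j * y j,
  summed in the two orders.\<close>

lemma cinner_mat_op:
  assumes x: "x \<in> l2" and y: "y \<in> l2"
  shows "cinner x (mat_op M y) = cinner (mat_op M x) y"
proof -
  have xy: "((\<lambda>(i, j). (cmod (x i))^2 * (cmod (y j))^2) has_sum (sqnorm x * sqnorm y)) UNIV"
    unfolding sqnorm_def using x y by (intro has_sum_product_nonneg) (auto simp: l2_def)
  have dominant: "(\<lambda>(i, j). (cmod (M i j))^2 + (cmod (x i))^2 * (cmod (y j))^2) summable_on UNIV"
    using summable_on_add[OF hs_summable has_sum_imp_summable[OF xy]] by (simp add: case_prod_unfold)
  have entry: "norm (cnj (x i) * M i j * y j) \<le> (cmod (M i j))^2 + (cmod (x i))^2 * (cmod (y j))^2"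
    for i j
  proof -
    let ?a = "cmod (M i j)" and ?b = "cmod (x i) * cmod (y j)"
    have "2 * (?a * ?b) \<le> ?a^2 + (cmod (x i))^2 * (cmod (y j))^2"
      using zero_le_power2[of "?a - ?b"] by (simp add: power2_diff power_mult_distrib)
    moreover have "norm (cnj (x i) * M i j * y j) = ?a * ?b"
      by (simp add: norm_mult)
    moreover have "0 \<le> ?a * ?b"
      by simp
    ultimately show ?thesis
      by linarith
  qed
  have "(\<lambda>p. norm ((\<lambda>(i, j). cnj (x i) * M i j * y j) p)) summable_on UNIV"
    by (rule Infinite_Sum.abs_summable_on_comparison_test'[OF dominant]) (auto simp: entry)
  then have double: "(\<lambda>(i, j). cnj (x i) * M i j * y j) summable_on UNIV"
    by (rule abs_summable_summable)
  have inner_j: "(\<Sum>j. cnj (x i) * M i j * y j) = cnj (x i) * mat_op M y i" for i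
    using summable_cinner_terms[OF row_in_l2 y, of i]
    by (simp add: mat_op_def row_def suminf_mult mult.assoc)
  have inner_i: "(\<Sum>i. cnj (x i) * M i j * y j) = cnj (mat_op M x j) * y j" for j
  proof -
    have "(\<lambda>i. cnj (M j i * x i)) sums cnj (mat_op M x j)"
      unfolding sums_cnj mat_op_def using summable_cinner_terms[OF row_in_l2 x, of j]
      by (simp add: row_def summable_sums)
    moreover have "cnj (M j i * x i) * y j = cnj (x i) * M i j * y j" for i
      by (subst hermitian[of i j]) simp
    ultimately have "(\<lambda>i. cnj (x i) * M i j * y j) sums (cnj (mat_op M x j) * y j)"
      using sums_mult2[of "\<lambda>i. cnj (M j i * x i)" _ "y j"] by presburger
    then show ?thesis
      by (simp add: sums_iff)
  qed
  show ?thesis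
    using suminf_swap_summable_on[OF double] by (simp add: cinner_def inner_i inner_j)
qed

lemma self_adjoint_op_mat_op: "self_adjoint_op (mat_op M)"
  unfolding self_adjoint_op_def using sqnorm_mat_op_le(1) mat_op_lincomb cinner_mat_op by blast

lemma contraction_op_mat_op: "contraction_op (mat_op M)"
  unfolding contraction_op_def using sqnorm_mat_op_le(2) by blast

end

section \<open>Matrices of positive operators\<close>

definition op_matrix :: "((nat \<Rightarrow> complex) \<Rightarrow> (nat \<Rightarrow> complex)) \<Rightarrow> nat \<Rightarrow> nat \<Rightarrow> complex" where
  "op_matrix T i j = cinner (basis_vec i) (T (basis_vec j))"

lemma density_operator_iff:
  "density_operator T \<longleftrightarrow>
     self_adjoint_op T \<and> positive_op T \<and> (\<lambda>i. op_matrix T i i) sums 1"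
  unfolding density_operator_def self_adjoint_op_def positive_op_def op_matrix_def
  by (simp only: conj_assoc)

lemma op_matrix_mat_op: "op_matrix (mat_op M) = M"
  by (intro ext) (simp add: op_matrix_def cinner_basis_vec_mat_op)

context
  fixes T :: "(nat \<Rightarrow> complex) \<Rightarrow> (nat \<Rightarrow> complex)"
  assumes T: "self_adjoint_op T"
begin

lemma op_matrix_hermitian: "op_matrix T i j = cnj (op_matrix T j i)"
proof -
  have "op_matrix T i j = cinner (T (basis_vec i)) (basis_vec j)"
    unfolding op_matrix_def by (rule self_adjoint_op_cinner[OF T basis_vec_in_l2 basis_vec_in_l2])
  also have "\<dots> = cnj (op_matrix T j i)"
    unfolding op_matrix_def by (rule cinner_commute[OF basis_vec_in_l2 self_adjoint_op_in_l2[OF T basis_vec_in_l2]])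
  finally show ?thesis .
qed

lemma self_adjoint_op_eq_mat_op:
  assumes x: "x \<in> l2"
  shows "T x = mat_op (op_matrix T) x"
proof
  fix i
  have "T x i = cinner (T (basis_vec i)) x"
    using self_adjoint_op_cinner[OF T basis_vec_in_l2 x] by (simp add: cinner_basis_vec_left)
  also have "\<dots> = (\<Sum>j. cnj (op_matrix T j i) * x j)"
    by (simp add: cinner_def[of "T (basis_vec i)"] op_matrix_def cinner_basis_vec_left)
  also have "\<dots> = mat_op (op_matrix T) x i"
    unfolding mat_op_def by (subst (2) op_matrix_hermitian) simp
  finally show "T x i = mat_op (op_matrix T) x i" .
qed

lemma op_matrix_diag_real: "of_real (Re (op_matrix T i i)) = op_matrix T i i"
  using arg_cong[OF op_matrix_hermitian[of i i], of Im] by (simp add: complex_eq_iff)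

context
  assumes P: "positive_op T"
begin

lemma op_matrix_diag_nonneg: "0 \<le> Re (op_matrix T i i)"
  using P basis_vec_in_l2[of i] by (simp add: positive_op_def op_matrix_def)

text \<open>Positivity of T on the span of two basis vectors: the 2x2 principal minors are nonnegative.\<close>

lemma cmod_op_matrix_sq_le:
  "(cmod (op_matrix T i j))^2 \<le> Re (op_matrix T i i) * Re (op_matrix T j j)"
proof (rule cmod_sq_le_of_psd_2x2)
  fix a b :: complex
  let ?x = "\<lambda>k. a * basis_vec i k + b * basis_vec j k"
  have x: "?x \<in> l2"
    by (intro l2_lincomb basis_vec_in_l2)
  have "cinner ?x (T ?x) = cnj a * cinner (basis_vec i) (T ?x) + cnj b * cinner (basis_vec j) (T ?x)"
    using x by (intro cinner_lincomb_left basis_vec_in_l2 self_adjoint_op_in_l2[OF T])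
  also have "\<dots> = cnj a * (a * op_matrix T i i + b * op_matrix T i j)
      + cnj b * (a * op_matrix T j i + b * op_matrix T j j)"
    by (simp add: self_adjoint_op_lincomb[OF T] basis_vec_in_l2 cinner_basis_vec_left op_matrix_def)
  also have "\<dots> = cnj a * (a * Re (op_matrix T i i) + b * op_matrix T i j)
      + cnj b * (a * cnj (op_matrix T i j) + b * Re (op_matrix T j j))"
    by (simp only: op_matrix_diag_real op_matrix_hermitian[of j i])
  moreover have "0 \<le> Re (cinner ?x (T ?x))"
    using P x by (simp add: positive_op_def)
  ultimately show "0 \<le> Re (cnj a * (a * Re (op_matrix T i i) + b * op_matrix T i j)
      + cnj b * (a * cnj (op_matrix T i j) + b * Re (op_matrix T j j)))"
    by (simp only:)
qed

lemma hermitian_hs_matrix_op_matrix: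
  assumes trace: "(\<lambda>i. op_matrix T i i) sums 1"
  shows "hermitian_hs_matrix (op_matrix T)"
proof
  have "(\<lambda>i. Re (op_matrix T i i)) sums 1"
    using trace by (simp add: sums_complex_iff)
  then have "((\<lambda>(i, j). Re (op_matrix T i i) * Re (op_matrix T j j)) has_sum (1 * 1)) UNIV"
    by (intro has_sum_product_nonneg op_matrix_diag_nonneg)
  then have diag: "((\<lambda>(i, j). Re (op_matrix T i i) * Re (op_matrix T j j)) has_sum 1) UNIV"
    by simp
  show summable: "(\<lambda>(i, j). (cmod (op_matrix T i j))^2) summable_on UNIV"
    by (rule summable_on_comparison_test[OF has_sum_imp_summable[OF diag]])
      (auto simp: cmod_op_matrix_sq_le)
  have "(\<Sum>\<^sub>\<infinity>(i, j)\<in>UNIV. (cmod (op_matrix T i j))^2)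
      \<le> (\<Sum>\<^sub>\<infinity>(i, j)\<in>UNIV. Re (op_matrix T i i) * Re (op_matrix T j j))"
    by (rule infsum_mono[OF summable has_sum_imp_summable[OF diag]]) (auto simp: cmod_op_matrix_sq_le)
  also have "\<dots> = 1"
    using diag by (simp add: has_sum_iff)
  finally show "(\<Sum>\<^sub>\<infinity>(i, j)\<in>UNIV. (cmod (op_matrix T i j))^2) \<le> 1" .
qed (rule op_matrix_hermitian)

end

end

section \<open>A positivity criterion\<close>

text \<open>If x had negative A-energy, the squared norms d j of (1 - A)^j x would form a log-convex
  sequence with d 0 < d 1, hence grow geometrically; but the contraction hypothesis bounds
  the increments of d by 2 d 0.\<close>

lemma positive_op_if_contractions:
  assumes A: "self_adjoint_op A"
    and contr: "\<And>m x. x \<in> l2 \<Longrightarrow> sqnorm (A ((id_minus A ^^ m) x)) \<le> sqnorm x"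
  shows "positive_op A"
  unfolding positive_op_def
proof (rule ballI, rule ccontr)
  fix x
  assume x: "x \<in> l2" and neg: "\<not> 0 \<le> Re (cinner x (A x))"
  define S where "S = id_minus A"
  have S: "self_adjoint_op S"
    unfolding S_def by (rule self_adjoint_op_id_minus[OF A])
  define d where "d j = sqnorm ((S ^^ j) x)" for j
  have Sx: "(S ^^ k) x \<in> l2" for k
    by (rule funpow_in_l2[OF S x])
  have d_nonneg: "0 \<le> d j" for j
    unfolding d_def by (rule sqnorm_nonneg[OF Sx])
  have increment: "cmod (cinner x ((S ^^ k) x) - cinner x ((S ^^ Suc k) x)) \<le> d 0" for k
  proof -
    have "(S ^^ Suc k) x = (\<lambda>i. (S ^^ k) x i - A ((S ^^ k) x) i)"
      by (simp add: S_def id_minus_def)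
    then have "cinner x ((S ^^ k) x) - cinner x ((S ^^ Suc k) x) = cinner x (A ((S ^^ k) x))"
      using x Sx A by (simp add: cinner_diff_right self_adjoint_op_in_l2)
    also have "cmod \<dots> \<le> sqrt (sqnorm x) * sqrt (sqnorm (A ((S ^^ k) x)))"
      by (rule cinner_Cauchy_Schwarz[OF x self_adjoint_op_in_l2[OF A Sx]])
    also have "\<dots> \<le> sqrt (sqnorm x) * sqrt (sqnorm x)"
      using contr[OF x, of k] sqnorm_nonneg[OF x] by (intro mult_left_mono) (auto simp: S_def)
    finally show ?thesis
      using sqnorm_nonneg[OF x] by (simp add: d_def)
  qed
  have bounded_increments: "d (Suc j) - d j \<le> 2 * d 0" for j
  proof -
    let ?c = "\<lambda>k. cinner x ((S ^^ k) x)"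
    have even: "?c (k + k) = of_real (d k)" for k
      unfolding d_def by (rule cinner_funpow_double[OF S x])
    have "of_real (d j - d (Suc j)) =
        (?c (j + j) - ?c (Suc (j + j))) + (?c (Suc (j + j)) - ?c (Suc (Suc (j + j))))"
      using even[of j] even[of "Suc j"] by simp
    then have "\<bar>d j - d (Suc j)\<bar>
        \<le> cmod (?c (j + j) - ?c (Suc (j + j))) + cmod (?c (Suc (j + j)) - ?c (Suc (Suc (j + j))))"
      by (metis norm_of_real norm_triangle_ineq)
    then show ?thesis
      using increment[of "j + j"] increment[of "Suc (j + j)"] by simp
  qed
  have d01: "0 < d 0 \<and> d 0 < d 1"
  proof -
    have "cinner x (S x) = cinner x x - cinner x (A x)"
      unfolding S_def id_minus_def by (rule cinner_diff_right[OF x x self_adjoint_op_in_l2[OF A x]])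
    then have "d 0 < Re (cinner x (S x))"
      using neg x by (simp add: cinner_self d_def)
    also have "\<dots> \<le> sqrt (d 0) * sqrt (d 1)"
      using complex_Re_le_cmod[of "cinner x (S x)"] cinner_Cauchy_Schwarz[OF x self_adjoint_op_in_l2[OF S x]]
      by (simp add: d_def)
    finally have less: "sqrt (d 0) * sqrt (d 0) < sqrt (d 0) * sqrt (d 1)"
      using d_nonneg[of 0] by simp
    then have pos: "0 < d 0"
      using d_nonneg[of 0] by (cases "d 0 = 0") auto
    then have "sqrt (d 0) < sqrt (d 1)"
      using mult_less_cancel_left_pos[of "sqrt (d 0)"] less by (simp del: real_sqrt_mult_self)
    with pos show ?thesis
      by simp
  qed
  obtain j where "2 * d 0 < d (Suc j) - d j"
    using log_convex_increments_unbounded[of d] d01 sqnorm_funpow_log_convex[OF S x]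
    unfolding d_def by auto
  with bounded_increments[of j] show False
    by simp
qed

section \<open>The sequence tr(A (1 - A)^n)\<close>

locale hermitian_hs_matrix_trace_one = hermitian_hs_matrix +
  assumes trace_one: "(\<lambda>i. M i i) sums 1"
begin

abbreviation A :: "(nat \<Rightarrow> complex) \<Rightarrow> (nat \<Rightarrow> complex)" where
  "A \<equiv> mat_op M"

abbreviation S :: "(nat \<Rightarrow> complex) \<Rightarrow> (nat \<Rightarrow> complex)" where
  "S \<equiv> id_minus (mat_op M)"

definition diag_AS :: "nat \<Rightarrow> nat \<Rightarrow> complex" where
  "diag_AS n i = cinner (basis_vec i) (A ((S ^^ n) (basis_vec i)))"

lemma self_adjoint_op_S: "self_adjoint_op S"
  by (rule self_adjoint_op_id_minus[OF self_adjoint_op_mat_op])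

lemma A_basis_vec_in_l2: "A (basis_vec i) \<in> l2"
  by (rule self_adjoint_op_in_l2[OF self_adjoint_op_mat_op basis_vec_in_l2])

lemma S_funpow_in_l2: "x \<in> l2 \<Longrightarrow> (S ^^ n) x \<in> l2"
  by (rule funpow_in_l2[OF self_adjoint_op_S])

lemma A_S_funpow_in_l2: "x \<in> l2 \<Longrightarrow> A ((S ^^ n) x) \<in> l2"
  by (rule self_adjoint_op_in_l2[OF self_adjoint_op_mat_op S_funpow_in_l2])

lemma self_adjoint_op_A_S_funpow: "self_adjoint_op (\<lambda>x. A ((S ^^ n) x))"
  by (rule self_adjoint_op_comp[OF self_adjoint_op_mat_op self_adjoint_op_funpow[OF self_adjoint_op_S]])
    (rule funpow_id_minus_commute[OF self_adjoint_op_mat_op])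

lemma S_funpow_Suc: "(S ^^ Suc n) x = (\<lambda>k. (S ^^ n) x k - A ((S ^^ n) x) k)"
  using id_minus_apply[of A "(S ^^ n) x"] by simp

lemma S_funpow_Suc_right:
  assumes x: "x \<in> l2"
  shows "(S ^^ Suc n) x = (\<lambda>k. (S ^^ n) x k - (S ^^ n) (A x) k)"
proof -
  have "(S ^^ Suc n) x = (S ^^ n) (\<lambda>k. x k - A x k)"
    by (simp only: funpow_Suc_right o_apply id_minus_def)
  also have "\<dots> = (\<lambda>k. (S ^^ n) x k - (S ^^ n) (A x) k)"
    by (rule self_adjoint_op_diff[OF self_adjoint_op_funpow[OF self_adjoint_op_S] x
          self_adjoint_op_in_l2[OF self_adjoint_op_mat_op x]])
  finally show ?thesis .
qed

lemma summable_diag_A_funpow: "summable (\<lambda>i. cinner (basis_vec i) ((A ^^ Suc k) (basis_vec i)))"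
proof (cases k)
  case 0
  then show ?thesis
    using trace_one by (simp add: cinner_basis_vec_mat_op sums_summable)
next
  case (Suc k')
  have "norm (cinner (basis_vec i) ((A ^^ Suc k) (basis_vec i))) \<le> sqnorm (row i)" for i
  proof -
    let ?Ae = "A (basis_vec i)"
    have "cinner (basis_vec i) ((A ^^ Suc k) (basis_vec i)) = cinner ?Ae ((A ^^ k') ?Ae)"
      using Suc self_adjoint_op_cinner[OF self_adjoint_op_mat_op basis_vec_in_l2
          funpow_in_l2[OF self_adjoint_op_mat_op A_basis_vec_in_l2], of i k' i]
      by (simp add: funpow_swap1)
    then have "norm (cinner (basis_vec i) ((A ^^ Suc k) (basis_vec i)))
        \<le> sqrt (sqnorm ?Ae) * sqrt (sqnorm ((A ^^ k') ?Ae))"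
      using cinner_Cauchy_Schwarz[OF A_basis_vec_in_l2
          funpow_in_l2[OF self_adjoint_op_mat_op A_basis_vec_in_l2]] by simp
    also have "\<dots> \<le> sqrt (sqnorm ?Ae) * sqrt (sqnorm ?Ae)"
      using sqnorm_funpow_le[OF self_adjoint_op_mat_op contraction_op_mat_op A_basis_vec_in_l2]
        sqnorm_nonneg[OF A_basis_vec_in_l2]
      by (intro mult_left_mono) auto
    also have "\<dots> = sqnorm (row i)"
      using sqnorm_nonneg[OF A_basis_vec_in_l2] by (simp add: mat_op_basis_vec_eq_row)
    finally show ?thesis .
  qed
  then show ?thesis
    by (intro summable_comparison_test'[where N=0, OF summable_sqnorm_row])
qed

lemma A_S_funpow_binomial:
  assumes "x \<in> l2"
  shows "A ((S ^^ n) x) = (\<lambda>j. \<Sum>k\<le>n. (-1)^k * of_nat (n choose k) * (A ^^ Suc k) x j)"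
  using assms
proof (induction n arbitrary: x)
  case (Suc n)
  have Ax: "A x \<in> l2"
    by (rule self_adjoint_op_in_l2[OF self_adjoint_op_mat_op Suc.prems])
  have S_step: "(A ^^ Suc k) (S x) = (\<lambda>j. (A ^^ Suc k) x j - (A ^^ Suc (Suc k)) x j)" for k
    using self_adjoint_op_diff[OF self_adjoint_op_funpow[OF self_adjoint_op_mat_op] Suc.prems Ax,
        of "Suc k"]
    by (simp add: id_minus_def funpow_swap1)
  have "A ((S ^^ Suc n) x) = A ((S ^^ n) (S x))"
    by (simp add: funpow_swap1)
  also have "\<dots> = (\<lambda>j. \<Sum>k\<le>n. (-1)^k * of_nat (n choose k) * (A ^^ Suc k) (S x) j)"
    by (rule Suc.IH[OF self_adjoint_op_in_l2[OF self_adjoint_op_S Suc.prems]])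
  also have "\<dots> = (\<lambda>j. \<Sum>k\<le>Suc n. (-1)^k * of_nat (Suc n choose k) * (A ^^ Suc k) x j)"
    unfolding S_step by (intro ext alternating_binomial_sum_diff)
  finally show ?case .
qed simp

lemma trace_binomial_eq_suminf_diag_AS:
  "(\<Sum>k\<le>n. (-1)^k * of_nat (n choose k) * (\<Sum>i. cinner (basis_vec i) ((A ^^ (k + 1)) (basis_vec i))))
    = (\<Sum>i. diag_AS n i)"
proof -
  have "(\<Sum>k\<le>n. (-1)^k * of_nat (n choose k) * (\<Sum>i. cinner (basis_vec i) ((A ^^ (k + 1)) (basis_vec i))))
      = (\<Sum>k\<le>n. \<Sum>i. (-1)^k * of_nat (n choose k) * cinner (basis_vec i) ((A ^^ Suc k) (basis_vec i)))"
    unfolding Suc_eq_plus1[symmetric]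
    by (intro sum.cong refl) (rule suminf_mult[OF summable_diag_A_funpow, symmetric])
  also have "\<dots>
      = (\<Sum>i. \<Sum>k\<le>n. (-1)^k * of_nat (n choose k) * cinner (basis_vec i) ((A ^^ Suc k) (basis_vec i)))"
    by (rule suminf_sum[symmetric]) (intro summable_mult summable_diag_A_funpow)
  also have "\<dots> = (\<Sum>i. diag_AS n i)"
    by (simp add: diag_AS_def cinner_basis_vec_left A_S_funpow_binomial[OF basis_vec_in_l2])
  finally show ?thesis .
qed

lemma summable_diag_AS: "summable (diag_AS n)"
  unfolding diag_AS_def cinner_basis_vec_left A_S_funpow_binomial[OF basis_vec_in_l2]
  using summable_diag_A_funpow by (auto intro!: summable_sum summable_mult simp: cinner_basis_vec_left)

lemma diag_AS_0: "diag_AS 0 i = M i i"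
  by (simp add: diag_AS_def cinner_basis_vec_mat_op)

lemma diag_AS_real: "of_real (Re (diag_AS n i)) = diag_AS n i"
  using Im_cinner_self_adjoint_op[OF self_adjoint_op_A_S_funpow basis_vec_in_l2, of i n]
  by (simp add: diag_AS_def complex_eq_iff)

lemma diag_AS_diff:
  "diag_AS n i - diag_AS (Suc n) i = cinner (A (basis_vec i)) ((S ^^ n) (A (basis_vec i)))"
proof -
  have "diag_AS (Suc n) i = diag_AS n i - cinner (basis_vec i) (A ((S ^^ n) (A (basis_vec i))))"
    unfolding diag_AS_def S_funpow_Suc_right[OF basis_vec_in_l2]
    using self_adjoint_op_diff[OF self_adjoint_op_mat_op S_funpow_in_l2 S_funpow_in_l2,
        OF basis_vec_in_l2 A_basis_vec_in_l2]
    by (simp add: cinner_diff_right basis_vec_in_l2 A_S_funpow_in_l2 A_basis_vec_in_l2)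
  moreover have "cinner (basis_vec i) (A ((S ^^ n) (A (basis_vec i))))
      = cinner (A (basis_vec i)) ((S ^^ n) (A (basis_vec i)))"
    by (rule self_adjoint_op_cinner[OF self_adjoint_op_mat_op basis_vec_in_l2
          S_funpow_in_l2[OF A_basis_vec_in_l2]])
  ultimately show ?thesis by simp
qed

lemma positive_op_S_funpow: "positive_op (S ^^ n)"
  by (rule positive_op_funpow[OF self_adjoint_op_S
        positive_op_id_minus[OF self_adjoint_op_mat_op contraction_op_mat_op]])

lemma Re_diag_AS_Suc_le: "Re (diag_AS (Suc n) i) \<le> Re (diag_AS n i)"
proof -
  have "0 \<le> Re (diag_AS n i - diag_AS (Suc n) i)"
    unfolding diag_AS_diff using positive_op_S_funpow A_basis_vec_in_l2
    by (simp add: positive_op_def)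
  then show ?thesis by simp
qed

lemma diag_AS_double:
  "diag_AS (m + m) i = cinner ((S ^^ m) (basis_vec i)) (A ((S ^^ m) (basis_vec i)))"
proof -
  have "A ((S ^^ (m + m)) (basis_vec i)) = (S ^^ m) (A ((S ^^ m) (basis_vec i)))"
    by (simp add: funpow_add funpow_id_minus_commute[OF self_adjoint_op_mat_op]
        S_funpow_in_l2 basis_vec_in_l2)
  then show ?thesis
    unfolding diag_AS_def
    by (simp add: self_adjoint_op_cinner[OF self_adjoint_op_funpow[OF self_adjoint_op_S]]
        basis_vec_in_l2 A_S_funpow_in_l2)
qed

lemma diag_AS_double_diff:
  "diag_AS (m + m) i - diag_AS (Suc (m + m)) i = of_real (sqnorm (A ((S ^^ m) (basis_vec i))))"
proof -
  have "diag_AS (m + m) i - diag_AS (Suc (m + m)) i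
      = cinner ((S ^^ m) (A (basis_vec i))) ((S ^^ m) (A (basis_vec i)))"
    unfolding diag_AS_diff funpow_add o_apply
    by (rule self_adjoint_op_cinner[OF self_adjoint_op_funpow[OF self_adjoint_op_S]
          A_basis_vec_in_l2 S_funpow_in_l2[OF A_basis_vec_in_l2]])
  also have "(S ^^ m) (A (basis_vec i)) = A ((S ^^ m) (basis_vec i))"
    by (rule funpow_id_minus_commute[OF self_adjoint_op_mat_op basis_vec_in_l2, symmetric])
  finally show ?thesis
    by (simp add: cinner_self A_S_funpow_in_l2 basis_vec_in_l2)
qed

lemma sum_diag_AS_telescope:
  "(\<Sum>n<N. diag_AS n i) = 1 - cinner (basis_vec i) ((S ^^ N) (basis_vec i))"
proof -
  have "diag_AS n i = cinner (basis_vec i) ((S ^^ n) (basis_vec i))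
      - cinner (basis_vec i) ((S ^^ Suc n) (basis_vec i))" for n
    unfolding diag_AS_def S_funpow_Suc
    by (simp add: cinner_diff_right basis_vec_in_l2 S_funpow_in_l2 A_S_funpow_in_l2)
  then have "(\<Sum>n<N. diag_AS n i) = cinner (basis_vec i) ((S ^^ 0) (basis_vec i))
      - cinner (basis_vec i) ((S ^^ N) (basis_vec i))"
    by (simp only:) (rule sum_lessThan_telescope')
  then show ?thesis
    by (simp add: cinner_basis_vec_self)
qed

end

context hermitian_hs_matrix_trace_one
begin

lemma Re_diag_AS_nonneg:
  assumes P: "positive_op A"
  shows "0 \<le> Re (diag_AS n i)"
proof -
  have even: "0 \<le> Re (diag_AS (m + m) i)" for m
    unfolding diag_AS_double using P S_funpow_in_l2[OF basis_vec_in_l2] by (simp add: positive_op_def)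
  have "n = n div 2 + n div 2 \<or> n = Suc (n div 2 + n div 2)"
    by presburger
  then obtain m where "n = m + m \<or> n = Suc (m + m)"
    by blast
  then show ?thesis
  proof
    assume n: "n = Suc (m + m)"
    have "0 \<le> Re (diag_AS (Suc m + Suc m) i)"
      by (rule even)
    also have "\<dots> \<le> Re (diag_AS n i)"
      using Re_diag_AS_Suc_le[of n i] n by simp
    finally show ?thesis .
  qed (use even in simp)
qed

lemma diag_AS_tendsto_0:
  assumes P: "positive_op A"
  shows "(\<lambda>n. diag_AS n i) \<longlonglongrightarrow> 0"
proof -
  have "(\<Sum>n<N. Re (diag_AS n i)) \<le> 1" for N
    using sum_diag_AS_telescope[where N=N and i=i] positive_op_S_funpow[of N] basis_vec_in_l2[of i]
    by (auto simp: positive_op_def simp flip: Re_sum)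
  then have "summable (\<lambda>n. Re (diag_AS n i))"
    by (intro summableI_nonneg_bounded[where x=1] Re_diag_AS_nonneg[OF P])
  then have "(\<lambda>n. of_real (Re (diag_AS n i))) \<longlonglongrightarrow> (of_real 0 :: complex)"
    by (intro tendsto_of_real summable_LIMSEQ_zero)
  then show ?thesis
    by (simp add: diag_AS_real)
qed

lemma trace_AS_tendsto_0:
  assumes P: "positive_op A"
  shows "(\<lambda>n. \<Sum>i. diag_AS n i) \<longlonglongrightarrow> 0"
proof -
  have bound: "norm (diag_AS n i) \<le> Re (M i i)" for n i
  proof -
    have "Re (diag_AS n i) \<le> Re (M i i)"
      by (induction n) (auto simp: diag_AS_0 intro: order.trans[OF Re_diag_AS_Suc_le])
    then show ?thesis
      using Re_diag_AS_nonneg[OF P, of n i] by (metis diag_AS_real norm_of_real abs_of_nonneg)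
  qed
  have "(\<lambda>n. \<Sum>i. diag_AS n i) \<longlonglongrightarrow> (\<Sum>i. 0 :: complex)"
  proof (rule tannerys_theorem[where M = "\<lambda>i. Re (M i i)", THEN conjunct2, THEN conjunct2])
    show "summable (\<lambda>i. Re (M i i))"
      using trace_one by (intro summable_Re sums_summable)
    show "\<forall>\<^sub>F (i, n) in at_top \<times>\<^sub>F sequentially. norm (diag_AS n i) \<le> Re (M i i)"
      by (intro always_eventually) (auto simp: bound)
  qed (auto intro: diag_AS_tendsto_0[OF P])
  then show ?thesis
    by simp
qed

lemma suminf_sqnorm_A_S_basis_vec_le_1:
  assumes lim: "(\<lambda>n. \<Sum>i. diag_AS n i) \<longlonglongrightarrow> 0"
  shows "summable (\<lambda>i. sqnorm (A ((S ^^ m) (basis_vec i))))"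
    and "(\<Sum>i. sqnorm (A ((S ^^ m) (basis_vec i)))) \<le> 1"
proof -
  define F where "F n = Re (\<Sum>i. diag_AS n i)" for n
  have F_diff: "F n - F (Suc n) = (\<Sum>i. Re (diag_AS n i - diag_AS (Suc n) i))" for n
    unfolding F_def
    by (simp add: Re_suminf summable_diag_AS
        suminf_diff[OF summable_Re[OF summable_diag_AS] summable_Re[OF summable_diag_AS]])
  have "decseq F"
  proof (rule decseq_SucI)
    fix n
    have "0 \<le> (\<Sum>i. Re (diag_AS n i - diag_AS (Suc n) i))"
      using Re_diag_AS_Suc_le by (intro suminf_nonneg summable_Re summable_diff summable_diag_AS) simp
    then show "F (Suc n) \<le> F n"
      using F_diff[of n] by simp
  qed
  moreover have "F \<longlonglongrightarrow> 0"
    unfolding F_def using tendsto_Re[OF lim] by simp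
  ultimately have F_nonneg: "0 \<le> F n" for n
    by (rule decseq_ge)
  have F_le_1: "F n \<le> 1" for n
    using decseqD[OF \<open>decseq F\<close>, of 0 n] trace_one by (simp add: F_def diag_AS_0 sums_iff)
  have double_diff: "(\<lambda>i. diag_AS (m + m) i - diag_AS (Suc (m + m)) i)
      = (\<lambda>i. of_real (sqnorm (A ((S ^^ m) (basis_vec i)))))"
    by (simp add: diag_AS_double_diff)
  have "summable (\<lambda>i. diag_AS (m + m) i - diag_AS (Suc (m + m)) i)"
    by (intro summable_diff summable_diag_AS)
  then show "summable (\<lambda>i. sqnorm (A ((S ^^ m) (basis_vec i))))"
    unfolding double_diff by (simp add: summable_of_real_iff)
  have "Re (diag_AS (m + m) i - diag_AS (Suc (m + m)) i) = sqnorm (A ((S ^^ m) (basis_vec i)))" for i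
    by (simp only: diag_AS_double_diff Re_complex_of_real)
  then have "(\<Sum>i. sqnorm (A ((S ^^ m) (basis_vec i)))) = F (m + m) - F (Suc (m + m))"
    unfolding F_diff by simp
  also have "\<dots> \<le> 1"
    using F_le_1[of "m + m"] F_nonneg[of "Suc (m + m)"] by simp
  finally show "(\<Sum>i. sqnorm (A ((S ^^ m) (basis_vec i)))) \<le> 1" .
qed

lemma positive_op_if_trace_AS_tendsto_0:
  assumes lim: "(\<lambda>n. \<Sum>i. diag_AS n i) \<longlonglongrightarrow> 0"
  shows "positive_op A"
proof (rule positive_op_if_contractions[OF self_adjoint_op_mat_op])
  fix m x
  assume x: "x \<in> l2"
  have "sqnorm (A ((S ^^ m) x)) \<le> (\<Sum>i. sqnorm (A ((S ^^ m) (basis_vec i)))) * sqnorm x"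
    using sqnorm_le_sum_sqnorm_basis[OF self_adjoint_op_A_S_funpow
        suminf_sqnorm_A_S_basis_vec_le_1(1)[OF lim] x] .
  also have "\<dots> \<le> sqnorm x"
    using mult_right_mono[OF suminf_sqnorm_A_S_basis_vec_le_1(2)[OF lim] sqnorm_nonneg[OF x]] by simp
  finally show "sqnorm (A ((S ^^ m) x)) \<le> sqnorm x" .
qed

lemma trace_condition_iff_positive_op:
  "(\<lambda>n. \<Sum>k\<le>n. (-1)^k * of_nat (n choose k) *
      (\<Sum>i. cinner (basis_vec i) ((mat_op M ^^ (k + 1)) (basis_vec i)))) \<longlonglongrightarrow> 0
    \<longleftrightarrow> positive_op (mat_op M)"
  unfolding trace_binomial_eq_suminf_diag_AS
  using trace_AS_tendsto_0 positive_op_if_trace_AS_tendsto_0 by blast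

end

lemma represents_state_iff: "represents_state M \<longleftrightarrow> (\<exists>T. density_operator T \<and> op_matrix T = M)"
  unfolding represents_state_def op_matrix_def by (auto simp: fun_eq_iff)

theorem theorem2p6:
  fixes M :: "nat \<Rightarrow> nat \<Rightarrow> complex"
  shows "represents_state M \<longleftrightarrow>
    ((\<lambda>(i, j). (cmod (M i j))^2) summable_on UNIV \<and>
       (\<Sum>\<^sub>\<infinity>(i, j)\<in>UNIV. (cmod (M i j))^2) \<le> 1) \<and>
    (\<forall>i j. M i j = cnj (M j i)) \<and>
    ((\<lambda>n. \<Sum>k\<le>n. (-1)^k * of_nat (n choose k) *
        (\<Sum>i. cinner (basis_vec i) ((mat_op M ^^ (k + 1)) (basis_vec i))))
      \<longlonglongrightarrow> 0) \<and>
    ((\<lambda>i. M i i) sums 1)"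
    (is "_ \<longleftrightarrow> ?hs \<and> ?hermitian \<and> ?trace_condition \<and> ?trace_one")
proof
  assume "represents_state M"
  then obtain T where T: "self_adjoint_op T" "positive_op T" "(\<lambda>i. M i i) sums 1"
    and M: "M = op_matrix T"
    unfolding represents_state_iff density_operator_iff by blast
  interpret hermitian_hs_matrix_trace_one M
    using hermitian_hs_matrix_op_matrix[OF T(1,2), folded M, OF T(3)] T(3)
    by (simp add: hermitian_hs_matrix_trace_one_def hermitian_hs_matrix_trace_one_axioms_def)
  have "positive_op (mat_op M)"
    using T(2) self_adjoint_op_eq_mat_op[OF T(1)] M by (simp add: positive_op_def)
  then show "?hs \<and> ?hermitian \<and> ?trace_condition \<and> ?trace_one"
    using hs_summable hs_le_1 hermitian trace_condition_iff_positive_op trace_one by blast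
next
  assume conditions: "?hs \<and> ?hermitian \<and> ?trace_condition \<and> ?trace_one"
  then interpret hermitian_hs_matrix_trace_one M
    by unfold_locales blast+
  have "density_operator (mat_op M)"
    unfolding density_operator_iff op_matrix_mat_op
    using self_adjoint_op_mat_op trace_condition_iff_positive_op conditions by blast
  then show "represents_state M"
    unfolding represents_state_iff using op_matrix_mat_op by blast
qed

end
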